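(* Let $G$ be a tree on $k$ vertices, $n\ge 1$, $e=(s,t)$ an edge of $G$, and let $\{u,v\}$ be one of the two special edges $\{s^n,t^n\}$, $\{s^{n-1}t,\,t^{n-1}s\}$ of the unique $e$-cycle of length $2^n$ in $\Gamma^G_n$. Then $$n(u,v)\,n(v,u)=n_G(s,t)\,n_G(t,s)\,k^{2(n-1)}=n_G(s,t)k^{n-1}\left(k^n-n_G(s,t)k^{n-1}\right)=n_G(t,s)k^{n-1}\left(k^n-n_G(t,s)k^{n-1}\right),$$ where $n_G(s,t)$ is the number of vertices of $G$ closer to $s$ than to $t$.
   Context: Let $G=(V,E)$ be a finite tree with vertex set $V$ of size $k$, and fix an orientation of each edge, so that each edge becomes an ordered pair $e=(s,t)$. Each oriented edge $e=(s,t)$ acts on the set $V^*$ of finite words over the alphabet $V$ by the recursive rule: $e(\emptyset)=\emptyset$, $e(sw)=t\,e(w)$, $e(tw)=sw$, and $e(xw)=xw$ for $x\in V\setminus\{s,t\}$ (words are read left to right, $w\in V^*$). This action preserves word length. For $n\ge 1$, the Schreier graph $\Gamma_n^G$ is the multigraph with vertex set $V^n$ having, for each $u\in V^n$ and each oriented edge $e$ of $G$, one edge joining $u$ and $e(u)$, labelled $e$ (a loop if $e(u)=u$). The orbit of $s^n$ under $e$ is $\{s,t\}^n$, forming with its $e$-labelled edges the unique $e$-cycle of length $2^n$. For vertices $u,v$ of a graph $H$, $n(u,v)$ (resp. $n_G(u,v)$ in $G$) is the number of vertices strictly closer in graph distance to $u$ than to $v$. *)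

theory Defs
  imports Main "HOL-Library.Extended_Nat"
begin

text \<open>A finite tree on vertex set V whose edges are oriented: E is a set of ordered
pairs (s,t); the underlying undirected graph (each undirected edge oriented exactly once)
is a tree.\<close>

definition und_adj :: "('a \<times> 'a) set \<Rightarrow> ('a \<times> 'a) set" where
  "und_adj E = E \<union> converse E"

definition oriented_tree :: "'a set \<Rightarrow> ('a \<times> 'a) set \<Rightarrow> bool" where
  "oriented_tree V E \<longleftrightarrow> finite V \<and> V \<noteq> {} \<and> E \<subseteq> V \<times> V
     \<and> (\<forall>s t. (s,t) \<in> E \<longrightarrow> s \<noteq> t \<and> (t,s) \<notin> E)
     \<and> (\<forall>x\<in>V. \<forall>y\<in>V. (x,y) \<in> (und_adj E)\<^sup>*)
     \<and> card E = card V - 1"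

fun edge_act :: "'a \<times> 'a \<Rightarrow> 'a list \<Rightarrow> 'a list" where
  "edge_act e [] = []"
| "edge_act (s,t) (x # w) =
     (if x = s then t # edge_act (s,t) w else if x = t then s # w else x # w)"

definition words :: "'a set \<Rightarrow> nat \<Rightarrow> 'a list set" where
  "words V n = {w. length w = n \<and> set w \<subseteq> V}"

text \<open>Adjacency of the Schreier graph \<Gamma>_n (loops/multiplicities irrelevant for distance).\<close>
definition schreier_adj :: "'a set \<Rightarrow> ('a \<times> 'a) set \<Rightarrow> nat \<Rightarrow> ('a list \<times> 'a list) set" where
  "schreier_adj V E n = {(u, w). u \<in> words V n \<and> w \<in> words V n \<and>
      (\<exists>e\<in>E. edge_act e u = w \<or> edge_act e w = u)}"

text \<open>Graph distance for an adjacency relation R (infinite if unreachable).\<close>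
definition gdist :: "('b \<times> 'b) set \<Rightarrow> 'b \<Rightarrow> 'b \<Rightarrow> enat" where
  "gdist R x y = (INF m \<in> {m. (x, y) \<in> R ^^ m}. enat m)"

definition ncloser :: "'b set \<Rightarrow> ('b \<times> 'b) set \<Rightarrow> 'b \<Rightarrow> 'b \<Rightarrow> nat" where
  "ncloser Vs R u v = card {w \<in> Vs. gdist R w u < gdist R w v}"

definition nG :: "'a set \<Rightarrow> ('a \<times> 'a) set \<Rightarrow> 'a \<Rightarrow> 'a \<Rightarrow> nat" where
  "nG V E s t = ncloser V (und_adj E) s t"

definition nGamma :: "'a set \<Rightarrow> ('a \<times> 'a) set \<Rightarrow> nat \<Rightarrow> 'a list \<Rightarrow> 'a list \<Rightarrow> nat" where
  "nGamma V E n u v = ncloser (words V n) (schreier_adj V E n) u v"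

end

(*
  Deleting the edge e = (s, t) splits the tree into the side S of s, with |S| = n_G(s,t), and
  its complement.  In \<Gamma>_n let A be the set of words whose last letter lies in S, so that
  |A| = k^(n-1) |S|.  An edge (p, q) changes the last letter of a word only if all earlier
  letters are p, so the only edges of \<Gamma>_n between A and its complement are the two special
  edges {s^n, t^n} and {t^(n-1) s, s^(n-1) t} of the e-cycle.  On the e-cycle, e acts as the
  increment of a binary counter, which puts both pairs t^(n-1) s, s^n and s^(n-1) t, t^n at
  distance 2^(n-1) - 1 along the cycle; a retraction of \<Gamma>_n onto the e-cycle that does not
  increase distances shows that there are no shortcuts.  In a connected graph whose edges between
  A and its complement are two such equidistant edges, exactly the vertices of A are closer to
  the A-end of a special edge than to its other end, hence n(u,v) n(v,u) = |A| (k^n - |A|).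
*)

theory Submission
  imports Defs
begin

section \<open>Graph distance and cuts with two edges\<close>

lemma gdist_le_relpow: "(x, y) \<in> R ^^ m \<Longrightarrow> gdist R x y \<le> enat m"
  unfolding gdist_def by (rule INF_lower2[of m]) auto

lemma enat_le_gdist: "(\<And>m. (x, y) \<in> R ^^ m \<Longrightarrow> d \<le> m) \<Longrightarrow> enat d \<le> gdist R x y"
  unfolding gdist_def by (rule INF_greatest) auto

lemma gdist_attained:
  assumes "(x, y) \<in> R\<^sup>*"
  obtains m where "(x, y) \<in> R ^^ m" "gdist R x y = enat m"
proof -
  obtain m0 where "(x, y) \<in> R ^^ m0" using assms rtrancl_power by blast
  then have least: "(x, y) \<in> R ^^ (LEAST m. (x, y) \<in> R ^^ m)" by (rule LeastI)
  moreover have "gdist R x y = enat (LEAST m. (x, y) \<in> R ^^ m)"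
    by (intro antisym gdist_le_relpow[OF least] enat_le_gdist) (simp add: Least_le)
  ultimately show thesis by (rule that)
qed

lemma gdist_refl [simp]: "gdist R x x = 0"
  using gdist_le_relpow[of x x 0 R] by (simp add: zero_enat_def[symmetric])

lemma gdist_triangle: "gdist R x z \<le> gdist R x y + gdist R y z"
proof (cases "(x, y) \<in> R\<^sup>* \<and> (y, z) \<in> R\<^sup>*")
  case True
  then obtain i j where "(x, y) \<in> R ^^ i" "gdist R x y = enat i"
    and "(y, z) \<in> R ^^ j" "gdist R y z = enat j"
    by (metis gdist_attained)
  moreover from this have "(x, z) \<in> R ^^ (i + j)" by (metis relcomp.relcompI relpow_add)
  ultimately show ?thesis by (metis gdist_le_relpow plus_enat_simps(1))
next
  case False
  then have "{m. (x, y) \<in> R ^^ m} = {} \<or> {m. (y, z) \<in> R ^^ m} = {}"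
    using rtrancl_power by blast
  then show ?thesis by (auto simp: gdist_def top_enat_def)
qed

lemma gdist_first_step:
  assumes "(x, r) \<in> R\<^sup>*" "x \<noteq> r"
  shows "\<exists>y. (x, y) \<in> R \<and> gdist R x r = gdist R y r + 1 \<and> gdist R y r \<noteq> \<infinity>"
proof -
  obtain m where m: "(x, r) \<in> R ^^ m" "gdist R x r = enat m"
    using assms(1) by (rule gdist_attained)
  moreover have "m \<noteq> 0" using m(1) assms(2) by (cases m) simp_all
  ultimately obtain m' where "m = Suc m'" by (meson not0_implies_Suc)
  with m(1) obtain y where y: "(x, y) \<in> R" "(y, r) \<in> R ^^ m'"
    by (auto elim: relpow_Suc_E2 simp del: relpow.simps)
  have "gdist R x r \<le> gdist R x y + gdist R y r" by (rule gdist_triangle)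
  also have "\<dots> \<le> 1 + gdist R y r"
    using gdist_le_relpow[of x y 1 R] y(1) by (simp add: one_enat_def add_right_mono)
  finally have "enat m \<le> 1 + gdist R y r" using m(2) by simp
  with gdist_le_relpow[OF y(2)] \<open>m = Suc m'\<close> have "gdist R y r = enat m'"
    by (cases "gdist R y r") (auto simp: one_enat_def)
  with y(1) m(2) \<open>m = Suc m'\<close> show ?thesis by (auto simp: one_enat_def)
qed

lemma relpow_sym: "sym R \<Longrightarrow> (x, y) \<in> R ^^ j \<Longrightarrow> (y, x) \<in> R ^^ j"
proof (induction j arbitrary: y)
  case (Suc j)
  then obtain z where "(x, z) \<in> R ^^ j" "(z, y) \<in> R" by auto
  with Suc show ?case by (metis relpow_Suc_I2 symD)
qed simp

lemma gdist_commute: "sym R \<Longrightarrow> gdist R x y = gdist R y x"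
  unfolding gdist_def by (metis relpow_sym)

lemma relpow_exit:
  assumes "(x, y) \<in> R ^^ m" "x \<in> A" "y \<notin> A"
  obtains i a b where "i < m" "(x, a) \<in> R ^^ i" "a \<in> A" "(a, b) \<in> R" "b \<notin> A"
    "(b, y) \<in> R ^^ (m - Suc i)"
  using assms
proof (induction m arbitrary: x thesis)
  case 0
  then show ?case by auto
next
  case (Suc m)
  from relpow_Suc_D2[OF Suc.prems(2)] obtain z where z: "(x, z) \<in> R" "(z, y) \<in> R ^^ m"
    by blast
  show ?case
  proof (cases "z \<in> A")
    case False
    show ?thesis by (rule Suc.prems(1)[of 0 x z]) (use z Suc.prems(3) False in simp_all)
  next
    case True
    obtain i a b where "i < m" "(z, a) \<in> R ^^ i" "a \<in> A" "(a, b) \<in> R" "b \<notin> A"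
      "(b, y) \<in> R ^^ (m - Suc i)"
      using Suc.IH[OF _ z(2) True Suc.prems(4)] by blast
    moreover from z(1) this(2) have "(x, a) \<in> R ^^ Suc i" by (rule relpow_Suc_I2)
    ultimately show ?thesis by (intro Suc.prems(1)[of "Suc i" a b]) auto
  qed
qed

text \<open>A shortest path from \<open>w\<close> to \<open>b1\<close> leaves \<open>A\<close> through \<open>(a1, b1)\<close> or through
  \<open>(a2, b2)\<close>; in the second case the detour from \<open>a2\<close> to \<open>a1\<close> is not longer than the
  remaining path from \<open>b2\<close> to \<open>b1\<close>.\<close>

lemma gdist_less_across_cut:
  assumes "w \<in> A" "b1 \<notin> A" "(w, b1) \<in> R\<^sup>*"
    and cross: "\<And>x y. (x, y) \<in> R \<Longrightarrow> x \<in> A \<Longrightarrow> y \<notin> A \<Longrightarrow> (x, y) = (a1, b1) \<or> (x, y) = (a2, b2)"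
    and "gdist R a2 a1 \<le> gdist R b2 b1"
  shows "gdist R w a1 < gdist R w b1"
proof -
  obtain m where m: "(w, b1) \<in> R ^^ m" "gdist R w b1 = enat m"
    using gdist_attained[OF assms(3)] .
  obtain i a b where i: "i < m" "(w, a) \<in> R ^^ i" "(a, b) \<in> R" "a \<in> A" "b \<notin> A"
    and rest: "(b, b1) \<in> R ^^ (m - Suc i)"
    using relpow_exit[OF m(1) assms(1,2)] by blast
  from cross[of a b] i have "(a, b) = (a1, b1) \<or> (a, b) = (a2, b2)" by auto
  then show ?thesis
  proof
    assume "(a, b) = (a1, b1)"
    then show ?thesis using gdist_le_relpow[OF i(2)] m(2) i(1) by (simp add: le_less_trans)
  next
    assume "(a, b) = (a2, b2)"
    then have "a = a2" "b = b2" by simp_all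
    have "gdist R w a1 \<le> gdist R w a2 + gdist R a2 a1" by (rule gdist_triangle)
    also have "\<dots> \<le> enat i + gdist R b2 b1"
      using gdist_le_relpow[OF i(2)] \<open>a = a2\<close> assms(5) by (simp add: add_mono)
    also have "\<dots> \<le> enat i + enat (m - Suc i)"
      using gdist_le_relpow[OF rest] \<open>b = b2\<close> by (simp add: add_left_mono del: plus_enat_simps)
    also have "\<dots> < gdist R w b1" using i(1) m(2) by simp
    finally show ?thesis .
  qed
qed

lemma ncloser_two_edge_cut:
  assumes RX: "R \<subseteq> X \<times> X" and "sym R" and conn: "\<forall>x\<in>X. \<forall>y\<in>X. (x, y) \<in> R\<^sup>*"
    and "A \<subseteq> X" "a1 \<in> A" "b1 \<in> X - A"
    and cross: "\<And>x y. (x, y) \<in> R \<Longrightarrow> x \<in> A \<Longrightarrow> y \<notin> A \<Longrightarrow> (x, y) = (a1, b1) \<or> (x, y) = (a2, b2)"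
    and dist: "gdist R a2 a1 = gdist R b2 b1"
  shows "ncloser X R a1 b1 = card A" "ncloser X R b1 a1 = card (X - A)"
proof -
  have cross': "(x, y) = (b1, a1) \<or> (x, y) = (b2, a2)"
    if "(x, y) \<in> R" "x \<in> X - A" "y \<notin> X - A" for x y
    using cross[of y x] symD[OF \<open>sym R\<close> that(1)] that RX by auto
  have reach: "(w, v) \<in> R\<^sup>*" if "w \<in> X" "v \<in> X" for w v
    using conn that by blast
  have near_a: "gdist R w a1 < gdist R w b1" if "w \<in> A" for w
    using gdist_less_across_cut[of w A b1 R a1 a2 b2, OF that _ _ cross] reach that assms
    by (simp add: subset_iff)
  have near_b: "gdist R w b1 < gdist R w a1" if "w \<in> X - A" for w
    using gdist_less_across_cut[of w "X - A" a1 R b1 b2 a2, OF that _ _ cross'] reach that assms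
    by (simp add: subset_iff)
  have "{w \<in> X. gdist R w a1 < gdist R w b1} = A"
    "{w \<in> X. gdist R w b1 < gdist R w a1} = X - A"
    using near_a near_b \<open>A \<subseteq> X\<close> by (auto dest: less_asym)
  then show "ncloser X R a1 b1 = card A" "ncloser X R b1 a1 = card (X - A)"
    by (simp_all add: ncloser_def)
qed

section \<open>Cutting a tree at an edge\<close>

lemma sym_und_adj: "sym (und_adj F)"
  by (auto simp: und_adj_def sym_def)

lemma und_adj_rtrancl_sym: "(x, y) \<in> (und_adj F)\<^sup>* \<Longrightarrow> (y, x) \<in> (und_adj F)\<^sup>*"
  by (rule symD[OF sym_rtrancl[OF sym_und_adj]])

lemma card_le_Suc_card_edges_if_connected:
  assumes "finite V" "finite F" and conn: "\<forall>x\<in>V. \<forall>y\<in>V. (x, y) \<in> (und_adj F)\<^sup>*"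
  shows "card V \<le> Suc (card F)"
proof (cases "V = {}")
  case False
  then obtain r where r: "r \<in> V" by blast
  let ?R = "und_adj F"
  have "\<exists>y. (x, y) \<in> ?R \<and> gdist ?R x r = gdist ?R y r + 1 \<and> gdist ?R y r \<noteq> \<infinity>"
    if "x \<in> V - {r}" for x
    using gdist_first_step[of x r ?R] conn r that by blast
  then obtain nb where nb: "\<And>x. x \<in> V - {r} \<Longrightarrow> (x, nb x) \<in> ?R
      \<and> gdist ?R x r = gdist ?R (nb x) r + 1 \<and> gdist ?R (nb x) r \<noteq> \<infinity>"
    by metis
  \<comment> \<open>each vertex other than \<open>r\<close> is mapped injectively to the first edge of a
    shortest path to \<open>r\<close>\<close>
  have "inj_on (\<lambda>x. {x, nb x}) (V - {r})"
  proof (rule inj_onI)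
    fix x y assume xy: "x \<in> V - {r}" "y \<in> V - {r}" "{x, nb x} = {y, nb y}"
    show "x = y"
    proof (rule ccontr)
      assume "x \<noteq> y"
      then have "y = nb x" "x = nb y" using xy(3) by (auto simp: doubleton_eq_iff)
      then show False using nb[OF xy(1)] nb[OF xy(2)]
        by (cases "gdist ?R x r") (auto simp: one_enat_def zero_enat_def)
    qed
  qed
  moreover have "(\<lambda>x. {x, nb x}) ` (V - {r}) \<subseteq> (\<lambda>(a, b). {a, b}) ` F"
    using nb by (force simp: und_adj_def)
  ultimately have "card (V - {r}) \<le> card ((\<lambda>(a, b). {a, b}) ` F)"
    using \<open>finite F\<close> by (intro card_inj_on_le) auto
  also have "\<dots> \<le> card F" using \<open>finite F\<close> by (rule card_image_le)
  finally show ?thesis using \<open>finite V\<close> r by (simp add: card_Diff_singleton)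
qed simp

lemma und_adj_rtrancl_delete_edge:
  assumes "(a, x) \<in> (und_adj F)\<^sup>*"
  shows "(a, x) \<in> (und_adj (F - {(a, b)}))\<^sup>* \<or> (b, x) \<in> (und_adj (F - {(a, b)}))\<^sup>*"
  using assms
proof (induction rule: rtrancl_induct)
  case (step y z)
  show ?case
  proof (cases "(y, z) \<in> und_adj (F - {(a, b)})")
    case True
    then show ?thesis using step.IH by (meson rtrancl.rtrancl_into_rtrancl)
  next
    case False
    then have "z = a \<or> z = b" using step.hyps(2) by (auto simp: und_adj_def)
    then show ?thesis by auto
  qed
qed simp

definition cut_by_edge :: "('a \<times> 'a) set \<Rightarrow> 'a set \<Rightarrow> 'a \<Rightarrow> 'a \<Rightarrow> bool" where
  "cut_by_edge E S s t \<longleftrightarrow> s \<in> S \<and> t \<notin> S \<and> (\<forall>p q. (p, q) \<in> E \<longrightarrow> (p, q) \<noteq> (s, t) \<longrightarrow> (p \<in> S \<longleftrightarrow> q \<in> S))"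

lemma cut_by_edgeD: "cut_by_edge E S s t \<Longrightarrow> (p, q) \<in> E \<Longrightarrow> (p, q) \<noteq> (s, t) \<Longrightarrow> p \<in> S \<longleftrightarrow> q \<in> S"
  unfolding cut_by_edge_def by blast

lemma cut_by_edge_und_adj_crossing:
  assumes "cut_by_edge E S s t" "(x, y) \<in> und_adj E" "x \<in> S" "y \<notin> S"
  shows "(x, y) = (s, t)"
proof -
  have "s \<in> S" using assms(1) by (simp add: cut_by_edge_def)
  from assms(2) consider "(x, y) \<in> E" | "(y, x) \<in> E" by (auto simp: und_adj_def)
  then show ?thesis
  proof cases
    case 1
    then show ?thesis using cut_by_edgeD[OF assms(1)] assms(3,4) by blast
  next
    case 2
    moreover have "(y, x) \<noteq> (s, t)" using \<open>s \<in> S\<close> assms(4) by auto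
    ultimately show ?thesis using cut_by_edgeD[OF assms(1)] assms(3,4) by blast
  qed
qed

lemma tree_cut_by_edge:
  assumes tree: "oriented_tree V E" and e: "(s, t) \<in> E"
  obtains S where "S \<subseteq> V" "cut_by_edge E S s t"
proof -
  have finV: "finite V" and EV: "E \<subseteq> V \<times> V" and conn: "\<forall>x\<in>V. \<forall>y\<in>V. (x, y) \<in> (und_adj E)\<^sup>*"
    and cardE: "card E = card V - 1"
    using tree unfolding oriented_tree_def by auto
  define F where "F = E - {(s, t)}"
  define S where "S = {x \<in> V. (s, x) \<in> (und_adj F)\<^sup>*}"
  have sV: "s \<in> V" and tV: "t \<in> V" using e EV by auto
  have finE: "finite E" using EV finV by (meson finite_SigmaI finite_subset)
  have "t \<notin> S"
  proof
    \<comment> \<open>otherwise the \<open>card V - 2\<close> edges of \<open>F\<close> would connect \<open>V\<close>\<close>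
    assume "t \<in> S"
    then have st: "(s, t) \<in> (und_adj F)\<^sup>*" by (simp add: S_def)
    have from_s: "(s, x) \<in> (und_adj F)\<^sup>*" if "x \<in> V" for x
      using und_adj_rtrancl_delete_edge[of s x E t] conn sV that rtrancl_trans[OF st]
      unfolding F_def by blast
    have "\<forall>x\<in>V. \<forall>y\<in>V. (x, y) \<in> (und_adj F)\<^sup>*"
      using from_s und_adj_rtrancl_sym by (meson rtrancl_trans)
    then have "card V \<le> Suc (card F)"
      using finV finE by (intro card_le_Suc_card_edges_if_connected) (auto simp: F_def)
    moreover have "Suc (card F) = card E"
      unfolding F_def using card_Suc_Diff1[OF finE e] .
    ultimately show False using cardE sV finV by (simp add: card_gt_0_iff)
  qed
  moreover have "p \<in> S \<longleftrightarrow> q \<in> S" if "(p, q) \<in> E" "(p, q) \<noteq> (s, t)" for p q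
  proof -
    have "(p, q) \<in> und_adj F" using that by (simp add: F_def und_adj_def)
    then show ?thesis using that EV unfolding S_def
      by (auto intro: rtrancl_into_rtrancl dest: symD[OF sym_und_adj])
  qed
  ultimately show thesis using sV by (intro that[of S]) (auto simp: S_def cut_by_edge_def)
qed

lemma nG_cut_by_edge:
  assumes tree: "oriented_tree V E" and e: "(s, t) \<in> E" and "S \<subseteq> V" and cut: "cut_by_edge E S s t"
  shows "nG V E s t = card S" "nG V E t s = card (V - S)"
proof -
  have EV: "E \<subseteq> V \<times> V" and conn: "\<forall>x\<in>V. \<forall>y\<in>V. (x, y) \<in> (und_adj E)\<^sup>*"
    using tree unfolding oriented_tree_def by auto
  have RV: "und_adj E \<subseteq> V \<times> V" using EV by (auto simp: und_adj_def)
  have ends: "s \<in> S" "t \<in> V - S" using cut e EV by (auto simp: cut_by_edge_def)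
  \<comment> \<open>a bridge is a cut whose two edges coincide\<close>
  have cross: "(x, y) = (s, t) \<or> (x, y) = (s, t)"
    if "(x, y) \<in> und_adj E" "x \<in> S" "y \<notin> S" for x y
    using cut_by_edge_und_adj_crossing[OF cut that] by simp
  show "nG V E s t = card S" "nG V E t s = card (V - S)"
    unfolding nG_def
    using ncloser_two_edge_cut[of "und_adj E" V S s t s t] RV sym_und_adj[of E] conn ends cross \<open>S \<subseteq> V\<close>
    by simp_all
qed

section \<open>The edge action and the binary counter\<close>

lemma length_edge_act [simp]: "length (edge_act e w) = length w"
  by (induction e w rule: edge_act.induct) auto

lemma length_edge_act_iterate [simp]: "length ((edge_act e ^^ j) w) = length w"
  by (induction j) auto

lemma set_edge_act_subset: "set (edge_act (p, q) w) \<subseteq> set w \<union> {p, q}"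
  by (induction w) auto

lemma set_edge_act_subset_iff: "set (edge_act (p, q) w) \<subseteq> {p, q} \<longleftrightarrow> set w \<subseteq> {p, q}"
  by (induction w) auto

lemma edge_act_replicate: "edge_act (p, q) (replicate m p) = replicate m q"
  by (induction m) auto

lemma edge_act_snoc:
  "edge_act (p, q) (w @ [x]) = edge_act (p, q) w @
     [if w = replicate (length w) p then (if x = p then q else if x = q then p else x) else x]"
  by (induction w) auto

text \<open>A word over \<open>{p, q}\<close> is read as a binary number, least significant digit first, with
  \<open>p\<close> as the digit 1; then \<open>edge_act (p, q)\<close> is the increment modulo \<open>2 ^ length w\<close>.\<close>

fun cycle_index :: "'a \<Rightarrow> 'a list \<Rightarrow> nat" where
  "cycle_index p [] = 0"
| "cycle_index p (x # w) = (if x = p then 1 else 0) + 2 * cycle_index p w"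

lemma cycle_index_less: "cycle_index p w < 2 ^ length w"
  by (induction w) auto

lemma cycle_index_append:
  "cycle_index p (xs @ ys) = cycle_index p xs + 2 ^ length xs * cycle_index p ys"
  by (induction xs) auto

lemma cycle_index_replicate_same: "cycle_index p (replicate m p) = 2 ^ m - 1"
proof (induction m)
  case (Suc m)
  obtain k where "(2::nat) ^ m = Suc k" using not0_implies_Suc by force
  with Suc show ?case by simp
qed simp

lemma cycle_index_replicate_other: "x \<noteq> p \<Longrightarrow> cycle_index p (replicate m x) = 0"
  by (induction m) auto

lemma cycle_index_edge_act:
  assumes "p \<noteq> q" "set w \<subseteq> {p, q}"
  shows "cycle_index p (edge_act (p, q) w) = (cycle_index p w + 1) mod 2 ^ length w"
  using assms(2)
proof (induction w)
  case (Cons x w)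
  show ?case
  proof (cases "x = p")
    case True
    then have "cycle_index p (edge_act (p, q) (x # w)) = 2 * ((cycle_index p w + 1) mod 2 ^ length w)"
      using Cons assms(1) by simp
    also have "\<dots> = (2 * (cycle_index p w + 1)) mod (2 * 2 ^ length w)" by (simp add: mult_mod_right)
    finally show ?thesis using True by (simp add: algebra_simps)
  next
    case False
    then have "x = q" using Cons.prems by auto
    moreover have "1 + 2 * cycle_index p w < 2 ^ length (x # w)"
      using cycle_index_less[of p w] by simp
    ultimately show ?thesis using assms(1) by auto
  qed
qed simp

lemma cycle_index_inj:
  assumes "set w \<subseteq> {p, q}" "set w' \<subseteq> {p, q}" "length w = length w'"
    and "cycle_index p w = cycle_index p w'"
  shows "w = w'"
  using assms
proof (induction w arbitrary: w')
  case (Cons x w)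
  then obtain x' v where "w' = x' # v" by (cases w') auto
  with Cons.prems show ?case using Cons.IH[of v] by (auto split: if_splits)
qed simp

lemma edge_act_iterate_cycle_index:
  assumes "p \<noteq> q" "set w \<subseteq> {p, q}"
  shows "set ((edge_act (p, q) ^^ j) w) \<subseteq> {p, q}
    \<and> cycle_index p ((edge_act (p, q) ^^ j) w) = (cycle_index p w + j) mod 2 ^ length w"
proof (induction j)
  case 0
  then show ?case using assms(2) cycle_index_less[of p w] by simp
next
  case (Suc j)
  then show ?case
    using cycle_index_edge_act[OF assms(1), of "(edge_act (p, q) ^^ j) w"]
    by (simp add: set_edge_act_subset_iff mod_Suc_eq)
qed

lemma edge_act_iterate_eq:
  assumes "p \<noteq> q" "set w \<subseteq> {p, q}" "set w' \<subseteq> {p, q}" "length w = length w'"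
    and "cycle_index p w + j = cycle_index p w'"
  shows "(edge_act (p, q) ^^ j) w = w'"
proof (rule cycle_index_inj[of _ p q])
  show "cycle_index p ((edge_act (p, q) ^^ j) w) = cycle_index p w'"
    using edge_act_iterate_cycle_index[OF assms(1,2), of j] assms(4,5) cycle_index_less[of p w']
    by simp
qed (use edge_act_iterate_cycle_index[OF assms(1,2)] assms in auto)

section \<open>Connectivity of the Schreier graph\<close>

lemma sym_schreier_adj: "sym (schreier_adj V E n)"
  by (auto simp: schreier_adj_def sym_def)

lemma schreier_adj_rtrancl_sym:
  "(x, y) \<in> (schreier_adj V E n)\<^sup>* \<Longrightarrow> (y, x) \<in> (schreier_adj V E n)\<^sup>*"
  by (rule symD[OF sym_rtrancl[OF sym_schreier_adj]])

lemma edge_act_in_words: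
  "(p, q) \<in> E \<Longrightarrow> E \<subseteq> V \<times> V \<Longrightarrow> w \<in> words V n \<Longrightarrow> edge_act (p, q) w \<in> words V n"
  using set_edge_act_subset[of p q w] by (auto simp: words_def)

lemma schreier_adj_edge_act:
  "(p, q) \<in> E \<Longrightarrow> E \<subseteq> V \<times> V \<Longrightarrow> w \<in> words V n \<Longrightarrow> (w, edge_act (p, q) w) \<in> schreier_adj V E n"
  using edge_act_in_words[of p q E V w n] unfolding schreier_adj_def by blast

lemma schreier_adj_relpow_edge_act_iterate:
  assumes "(p, q) \<in> E" "E \<subseteq> V \<times> V" "w \<in> words V n"
  shows "(w, (edge_act (p, q) ^^ j) w) \<in> schreier_adj V E n ^^ j"
proof -
  have "(edge_act (p, q) ^^ j) w \<in> words V n \<and> (w, (edge_act (p, q) ^^ j) w) \<in> schreier_adj V E n ^^ j"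
  proof (induction j)
    case (Suc j)
    then show ?case
      using edge_act_in_words[OF assms(1,2)] schreier_adj_edge_act[OF assms(1,2)] by auto
  qed (use assms(3) in simp)
  then show ?thesis ..
qed

lemma schreier_adj_relpow_cycle:
  assumes "(p, q) \<in> E" "E \<subseteq> V \<times> V" "p \<noteq> q" "set w \<subseteq> {p, q}" "set w' \<subseteq> {p, q}"
    "length w = n" "length w' = n" "cycle_index p w + j = cycle_index p w'"
  shows "(w, w') \<in> schreier_adj V E n ^^ j"
proof -
  have "w \<in> words V n" using assms(1,2,4,6) by (auto simp: words_def)
  with edge_act_iterate_eq[OF assms(3-5) _ assms(8)] assms(6,7) show ?thesis
    using schreier_adj_relpow_edge_act_iterate[OF assms(1,2)] by metis
qed

lemma schreier_cycle_connected:
  assumes "(p, q) \<in> E" "E \<subseteq> V \<times> V" "set w \<subseteq> {p, q}" "set w' \<subseteq> {p, q}"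
    "length w = n" "length w' = n"
  shows "(w, w') \<in> (schreier_adj V E n)\<^sup>*"
proof (cases "p = q")
  case True
  then have "w = replicate n p" "w' = replicate n p"
    using assms(3-6) by (auto intro: replicate_eqI)
  then show ?thesis by simp
next
  case False
  have "set (replicate n q) \<subseteq> {p, q}" by auto
  moreover have "cycle_index p (replicate n q) = 0"
    using False by (simp add: cycle_index_replicate_other)
  ultimately have "(replicate n q, v) \<in> (schreier_adj V E n)\<^sup>*"
    if "set v \<subseteq> {p, q}" "length v = n" for v
    using schreier_adj_relpow_cycle[OF assms(1,2) False _ that(1) _ that(2),
        of "replicate n q" "cycle_index p v"]
    by (simp add: relpow_imp_rtrancl)
  from this[OF assms(3,5)] this[OF assms(4,6)] show ?thesis
    by (meson rtrancl_trans schreier_adj_rtrancl_sym)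
qed

text \<open>The generator \<open>(p, q)\<close> changes an appended letter only when acting on \<open>p^n\<close>, and
  then both words lie on the connected \<open>(p, q)\<close>-cycle.\<close>

lemma schreier_adj_snoc_rtrancl:
  assumes "(w1, w2) \<in> schreier_adj V E n" "x \<in> V" "E \<subseteq> V \<times> V"
  shows "(w1 @ [x], w2 @ [x]) \<in> (schreier_adj V E (Suc n))\<^sup>*"
proof -
  have step: "(w1 @ [x], edge_act (p, q) w1 @ [x]) \<in> (schreier_adj V E (Suc n))\<^sup>*"
    if pq: "(p, q) \<in> E" and w1: "w1 \<in> words V n" for w1 p q
  proof -
    define x' where "x' = (if w1 = replicate (length w1) p
      then (if x = p then q else if x = q then p else x) else x)"
    have "w1 @ [x] \<in> words V (Suc n)" using w1 \<open>x \<in> V\<close> by (auto simp: words_def)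
    then have "(w1 @ [x], edge_act (p, q) (w1 @ [x])) \<in> schreier_adj V E (Suc n)"
      by (rule schreier_adj_edge_act[OF pq assms(3)])
    then have "(w1 @ [x], edge_act (p, q) w1 @ [x']) \<in> schreier_adj V E (Suc n)"
      by (simp only: edge_act_snoc x'_def)
    moreover have "(edge_act (p, q) w1 @ [x'], edge_act (p, q) w1 @ [x]) \<in> (schreier_adj V E (Suc n))\<^sup>*"
    proof (cases "x' = x")
      case False
      then have "w1 = replicate n p" "x \<in> {p, q}" "x' \<in> {p, q}"
        using w1 unfolding x'_def words_def by (auto split: if_splits)
      then show ?thesis
        using schreier_cycle_connected[OF pq assms(3), of "edge_act (p, q) w1 @ [x']"
            "edge_act (p, q) w1 @ [x]" "Suc n"]
        by (simp add: edge_act_replicate set_replicate_conv_if)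
    qed simp
    ultimately show ?thesis by simp
  qed
  from assms(1) obtain p q where "(p, q) \<in> E" "w1 \<in> words V n" "w2 \<in> words V n"
    "edge_act (p, q) w1 = w2 \<or> edge_act (p, q) w2 = w1"
    unfolding schreier_adj_def by auto
  then show ?thesis using step schreier_adj_rtrancl_sym by metis
qed

lemma schreier_rtrancl_snoc:
  assumes "(w1, w2) \<in> (schreier_adj V E n)\<^sup>*" "x \<in> V" "E \<subseteq> V \<times> V"
  shows "(w1 @ [x], w2 @ [x]) \<in> (schreier_adj V E (Suc n))\<^sup>*"
  using assms(1)
proof (induction rule: rtrancl_induct)
  case (step y z)
  then show ?case using schreier_adj_snoc_rtrancl[OF step(2) assms(2,3)] by simp
qed simp

lemma words_SucE:
  assumes "u \<in> words V (Suc n)"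
  obtains w x where "u = w @ [x]" "w \<in> words V n" "x \<in> V"
proof -
  from assms have "u \<noteq> []" by (auto simp: words_def)
  moreover from this assms have "butlast u \<in> words V n" "last u \<in> V"
    by (auto simp: words_def dest: in_set_butlastD)
  ultimately show thesis using that[of "butlast u" "last u"] by simp
qed

lemma schreier_connected_Suc:
  assumes conn: "\<forall>w1\<in>words V n. \<forall>w2\<in>words V n. (w1, w2) \<in> (schreier_adj V E n)\<^sup>*"
    and connG: "\<forall>x\<in>V. \<forall>y\<in>V. (x, y) \<in> (und_adj E)\<^sup>*" and EV: "E \<subseteq> V \<times> V"
  shows "\<forall>u\<in>words V (Suc n). \<forall>v\<in>words V (Suc n). (u, v) \<in> (schreier_adj V E (Suc n))\<^sup>*"
proof -
  let ?R = "schreier_adj V E (Suc n)"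
  have same_last: "(w1 @ [x], w2 @ [x]) \<in> ?R\<^sup>*"
    if "w1 \<in> words V n" "w2 \<in> words V n" "x \<in> V" for w1 w2 x
    using schreier_rtrancl_snoc[OF _ that(3) EV] conn that by blast
  have change_last: "(w @ [x], w @ [y]) \<in> ?R\<^sup>*"
    if "(x, y) \<in> (und_adj E)\<^sup>*" "x \<in> V" "w \<in> words V n" for w x y
    using that(1)
  proof (induction rule: rtrancl_induct)
    case (step y z)
    then have yz: "(y, z) \<in> E \<or> (z, y) \<in> E" "y \<in> V" using EV by (auto simp: und_adj_def)
    let ?c = "replicate n y"
    have c: "?c \<in> words V n" using yz(2) by (auto simp: words_def)
    have "(?c @ [y], ?c @ [z]) \<in> ?R\<^sup>*"
      using yz(1) schreier_cycle_connected[OF _ EV, of y z "?c @ [y]" "?c @ [z]" "Suc n"]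
        schreier_cycle_connected[OF _ EV, of z y "?c @ [y]" "?c @ [z]" "Suc n"]
      by (auto simp: set_replicate_conv_if)
    moreover have "z \<in> V" using yz EV by auto
    ultimately show ?case
      using step.IH same_last[OF that(3) c yz(2)] same_last[OF c that(3)]
      by (meson rtrancl_trans)
  qed simp
  show ?thesis
  proof (intro ballI)
    fix u v assume "u \<in> words V (Suc n)" "v \<in> words V (Suc n)"
    then obtain u' x v' y where "u = u' @ [x]" "v = v' @ [y]" "u' \<in> words V n" "v' \<in> words V n"
      "x \<in> V" "y \<in> V"
      by (metis words_SucE)
    then show "(u, v) \<in> ?R\<^sup>*"
      using change_last[of x y u'] same_last[of u' v' y] connG by (meson rtrancl_trans)
  qed
qed

lemma schreier_connected:
  assumes "oriented_tree V E"
  shows "\<forall>u\<in>words V n. \<forall>v\<in>words V n. (u, v) \<in> (schreier_adj V E n)\<^sup>*"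
proof (induction n)
  case 0
  then show ?case by (simp add: words_def)
next
  case (Suc n)
  with assms show ?case by (intro schreier_connected_Suc) (auto simp: oriented_tree_def)
qed

section \<open>Retraction onto the \<open>e\<close>-cycle\<close>

text \<open>The retraction of \<open>\<Gamma>_n\<close> onto the \<open>e\<close>-cycle \<open>{s, t}^n\<close>: all letters up to the last one
  outside \<open>{s, t}\<close> are replaced by \<open>s\<close> or \<open>t\<close>, according to the side of that letter.\<close>

fun retract :: "'a set \<Rightarrow> 'a \<Rightarrow> 'a \<Rightarrow> 'a list \<Rightarrow> 'a list" where
  "retract S s t [] = []"
| "retract S s t (x # w) = (if set w \<subseteq> {s, t} then (if x \<in> S then s else t) # w
     else hd (retract S s t w) # retract S s t w)"

lemma length_retract [simp]: "length (retract S s t w) = length w"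
  by (induction w) auto

lemma retract_cycle_word: "s \<in> S \<Longrightarrow> t \<notin> S \<Longrightarrow> set w \<subseteq> {s, t} \<Longrightarrow> retract S s t w = w"
  by (induction w) auto

lemma edge_act_changed_hd:
  "edge_act (p, q) w \<noteq> w \<Longrightarrow> w \<noteq> [] \<and> hd w \<in> {p, q} \<and> hd (edge_act (p, q) w) \<in> {p, q}"
  by (cases w) (auto split: if_splits)

lemma edge_act_fixes_cycle_word:
  assumes "p \<noteq> q" "{p, q} \<noteq> {s, t}" "set w \<subseteq> {s, t}" "set (edge_act (p, q) w) \<subseteq> {s, t}"
  shows "edge_act (p, q) w = w"
  using assms by (cases w) (auto split: if_splits)

lemma retract_edge_act_same_side:
  assumes sS: "s \<in> S" "t \<notin> S" and pq: "p \<noteq> q" "{p, q} \<noteq> {s, t}" "(p \<in> S) = (q \<in> S)"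
  shows "retract S s t (edge_act (p, q) w) = retract S s t w"
proof (induction w)
  case (Cons x w)
  let ?f = "edge_act (p, q)" and ?side = "\<lambda>x. if x \<in> S then s else t"
  have side_hd: "?side p = hd z" "?side q = hd z"
    if "z \<noteq> []" "hd z \<in> {p, q}" "set z \<subseteq> {s, t}" for z
  proof -
    have "hd z \<in> {s, t}" using that(1,3) hd_in_set by blast
    with that(2) sS pq(3) show "?side p = hd z" "?side q = hd z" by auto
  qed
  consider "x = p" | "x = q" "x \<noteq> p" | "x \<noteq> p" "x \<noteq> q" by blast
  then show ?case
  proof cases
    case 1
    then have f: "?f (x # w) = q # ?f w" by simp
    consider "set w \<subseteq> {s, t}" "set (?f w) \<subseteq> {s, t}" | "\<not> set w \<subseteq> {s, t}" "\<not> set (?f w) \<subseteq> {s, t}"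
      | "set w \<subseteq> {s, t}" "\<not> set (?f w) \<subseteq> {s, t}" | "\<not> set w \<subseteq> {s, t}" "set (?f w) \<subseteq> {s, t}"
      by blast
    then show ?thesis
    proof cases
      case 1
      then show ?thesis using f edge_act_fixes_cycle_word[OF pq(1,2)] pq(3) \<open>x = p\<close> by simp
    next
      case 2
      then show ?thesis using f Cons.IH by simp
    next
      case 3
      then have "?f w \<noteq> w" by auto
      then have "w \<noteq> []" "hd w \<in> {p, q}" using edge_act_changed_hd[OF \<open>?f w \<noteq> w\<close>] by auto
      then have "?side p = hd w" using 3(1) by (rule side_hd(1))
      then show ?thesis using f Cons.IH 3 retract_cycle_word[OF sS 3(1)] \<open>x = p\<close> by simp
    next
      case 4
      then have "?f w \<noteq> w" by auto
      then have "w \<noteq> []" "hd (?f w) \<in> {p, q}" using edge_act_changed_hd[OF \<open>?f w \<noteq> w\<close>] by auto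
      then have "?side q = hd (?f w)" using side_hd(2)[of "?f w"] 4(2) by (cases w) auto
      then show ?thesis using f Cons.IH 4 retract_cycle_word[OF sS 4(2)] \<open>x = p\<close> by simp
    qed
  next
    case 2
    then show ?thesis using pq(3) by simp
  qed simp
qed simp

lemma retract_edge_act_other:
  assumes cut: "cut_by_edge E S s t" and pq: "(p, q) \<in> E" "(p, q) \<noteq> (s, t)"
  shows "retract S s t (edge_act (p, q) w) = retract S s t w"
proof (cases "p = q")
  case True
  then have "edge_act (p, q) w = w" by (induction w) auto
  then show ?thesis by simp
next
  case False
  have sS: "s \<in> S" "t \<notin> S" using cut by (auto simp: cut_by_edge_def)
  have side: "(p \<in> S) = (q \<in> S)" using cut_by_edgeD[OF cut pq] .
  have "{p, q} \<noteq> {s, t}"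
  proof
    assume "{p, q} = {s, t}"
    with pq(2) have "p = t" "q = s" by (auto simp: doubleton_eq_iff)
    with side sS show False by simp
  qed
  from sS False this side show ?thesis by (rule retract_edge_act_same_side)
qed

lemma retract_edge_act_off_cycle:
  "\<not> set w \<subseteq> {s, t} \<Longrightarrow> retract S s t (edge_act (s, t) w) = retract S s t w"
proof (induction w)
  case (Cons x w)
  then show ?case
    using set_edge_act_subset_iff[of s t w] by (cases "x = s"; cases "x = t") auto
qed simp

text \<open>The distance along the \<open>e\<close>-cycle from the retraction of \<open>w\<close> to \<open>t^n\<close>.\<close>

definition cycle_potential :: "'a set \<Rightarrow> 'a \<Rightarrow> 'a \<Rightarrow> 'a list \<Rightarrow> nat" where
  "cycle_potential S s t w =
    min (cycle_index s (retract S s t w)) (2 ^ length w - cycle_index s (retract S s t w))"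

lemma cycle_potential_cycle_word:
  "s \<in> S \<Longrightarrow> t \<notin> S \<Longrightarrow> set w \<subseteq> {s, t} \<Longrightarrow>
    cycle_potential S s t w = min (cycle_index s w) (2 ^ length w - cycle_index s w)"
  by (simp add: cycle_potential_def retract_cycle_word)

lemma cycle_potential_edge_act:
  assumes cut: "cut_by_edge E S s t" and pq: "(p, q) \<in> E"
  shows "cycle_potential S s t (edge_act (p, q) w) \<le> cycle_potential S s t w + 1
    \<and> cycle_potential S s t w \<le> cycle_potential S s t (edge_act (p, q) w) + 1"
proof (cases "(p, q) = (s, t) \<and> set w \<subseteq> {s, t}")
  case True
  then have pq: "p = s" "q = t" and w: "set w \<subseteq> {s, t}" by auto
  have sS: "s \<in> S" "t \<notin> S" using cut by (auto simp: cut_by_edge_def)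
  then have "s \<noteq> t" by auto
  define N where "N = (2::nat) ^ length w"
  define v where "v = cycle_index s w"
  have "v < N" unfolding v_def N_def by (rule cycle_index_less)
  have "cycle_potential S s t w = min v (N - v)"
    using cycle_potential_cycle_word[OF sS w] by (simp add: v_def N_def)
  moreover have "cycle_potential S s t (edge_act (s, t) w) = min ((v + 1) mod N) (N - (v + 1) mod N)"
    using cycle_potential_cycle_word[OF sS, of "edge_act (s, t) w"] w
      cycle_index_edge_act[OF \<open>s \<noteq> t\<close> w]
    by (simp add: v_def N_def set_edge_act_subset_iff)
  moreover have "(v + 1) mod N = (if v + 1 = N then 0 else v + 1)" using \<open>v < N\<close> by auto
  ultimately show ?thesis using pq \<open>v < N\<close> by (auto simp: min_def)
next
  case False
  then consider "(p, q) \<noteq> (s, t)" | "(p, q) = (s, t)" "\<not> set w \<subseteq> {s, t}" by blast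
  then have "retract S s t (edge_act (p, q) w) = retract S s t w"
    by cases (simp_all add: retract_edge_act_other[OF cut pq] retract_edge_act_off_cycle)
  then show ?thesis by (simp add: cycle_potential_def)
qed

lemma cycle_potential_diff_le_gdist:
  assumes cut: "cut_by_edge E S s t"
  shows "enat (cycle_potential S s t x - cycle_potential S s t y) \<le> gdist (schreier_adj V E n) x y"
proof (rule enat_le_gdist)
  fix j assume "(x, y) \<in> schreier_adj V E n ^^ j"
  then show "cycle_potential S s t x - cycle_potential S s t y \<le> j"
  proof (induction j arbitrary: y)
    case (Suc j)
    then obtain z where z: "(x, z) \<in> schreier_adj V E n ^^ j" "(z, y) \<in> schreier_adj V E n" by auto
    then obtain p q where pq: "(p, q) \<in> E" "edge_act (p, q) z = y \<or> edge_act (p, q) y = z"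
      unfolding schreier_adj_def by auto
    then have "cycle_potential S s t z \<le> cycle_potential S s t y + 1"
      using cycle_potential_edge_act[OF cut pq(1), of z] cycle_potential_edge_act[OF cut pq(1), of y]
      by auto
    with Suc.IH[OF z(1)] show ?case by simp
  qed simp
qed

section \<open>The special edges of the \<open>e\<close>-cycle\<close>

lemma edge_act_snoc_last_changed:
  assumes "last (edge_act (p, q) (w @ [x])) \<noteq> x"
  shows "w = replicate (length w) p" "x \<in> {p, q}"
    "edge_act (p, q) (w @ [x]) = replicate (length w) q @ [if x = p then q else p]"
proof -
  show w: "w = replicate (length w) p" "x \<in> {p, q}"
    using assms by (auto simp: edge_act_snoc split: if_splits)
  have "edge_act (p, q) w = replicate (length w) q" by (subst w(1)) (simp add: edge_act_replicate)
  then show "edge_act (p, q) (w @ [x]) = replicate (length w) q @ [if x = p then q else p]"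
    using w assms by (auto simp: edge_act_snoc)
qed

lemma edge_act_crossing_cut:
  assumes cut: "cut_by_edge E S s t" and "(p, q) \<in> E"
    and side: "(x \<in> S) \<noteq> (last (edge_act (p, q) (w @ [x])) \<in> S)"
  shows "(p, q) = (s, t)" "w = replicate (length w) s" "x \<in> {s, t}"
    "edge_act (p, q) (w @ [x]) = replicate (length w) t @ [if x = s then t else s]"
proof -
  from side have changed: "last (edge_act (p, q) (w @ [x])) \<noteq> x" by auto
  note snoc = edge_act_snoc_last_changed[OF changed]
  have "(p \<in> S) \<noteq> (q \<in> S)" using side snoc(2,3) by (auto split: if_splits)
  then show "(p, q) = (s, t)" using cut_by_edgeD[OF cut \<open>(p, q) \<in> E\<close>] by blast
  then show "w = replicate (length w) s" "x \<in> {s, t}"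
    "edge_act (p, q) (w @ [x]) = replicate (length w) t @ [if x = s then t else s]"
    using snoc by auto
qed

lemma schreier_adj_crossing:
  assumes cut: "cut_by_edge E S s t" and adj: "(x, y) \<in> schreier_adj V E (Suc m)"
    and "last x \<in> S" "last y \<notin> S"
  shows "(x, y) = (replicate (Suc m) s, replicate (Suc m) t)
    \<or> (x, y) = (replicate m t @ [s], replicate m s @ [t])"
proof -
  obtain p q where pq: "(p, q) \<in> E" "edge_act (p, q) x = y \<or> edge_act (p, q) y = x"
    and "x \<in> words V (Suc m)" "y \<in> words V (Suc m)"
    using adj unfolding schreier_adj_def by auto
  obtain x' a where x: "x = x' @ [a]" "x' \<in> words V m" "a \<in> V"
    by (rule words_SucE[OF \<open>x \<in> words V (Suc m)\<close>])
  obtain y' b where y: "y = y' @ [b]" "y' \<in> words V m" "b \<in> V"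
    by (rule words_SucE[OF \<open>y \<in> words V (Suc m)\<close>])
  have "s \<in> S" "t \<notin> S" using cut by (auto simp: cut_by_edge_def)
  then have "s \<noteq> t" by auto
  from pq(2) show ?thesis
  proof
    assume "edge_act (p, q) x = y"
    with \<open>last x \<in> S\<close> \<open>last y \<notin> S\<close> have "(a \<in> S) \<noteq> (last (edge_act (p, q) (x' @ [a])) \<in> S)"
      using x by simp
    note crossing = edge_act_crossing_cut[OF cut pq(1) this]
    have "a = s" using crossing(3) \<open>last x \<in> S\<close> \<open>t \<notin> S\<close> x by auto
    then show ?thesis using crossing \<open>edge_act (p, q) x = y\<close> x
      by (simp add: replicate_append_same words_def)
  next
    assume "edge_act (p, q) y = x"
    with \<open>last x \<in> S\<close> \<open>last y \<notin> S\<close> have "(b \<in> S) \<noteq> (last (edge_act (p, q) (y' @ [b])) \<in> S)"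
      using y by simp
    note crossing = edge_act_crossing_cut[OF cut pq(1) this]
    have "b = t" using crossing(3) \<open>last y \<notin> S\<close> \<open>s \<in> S\<close> y by auto
    then have "x = replicate m t @ [s]"
      using crossing(4) \<open>edge_act (p, q) y = x\<close> y \<open>s \<noteq> t\<close> by (simp add: words_def)
    then show ?thesis using crossing(2) y \<open>b = t\<close> by (simp add: words_def)
  qed
qed

lemma card_words_last_in:
  assumes "finite V" "S \<subseteq> V"
  shows "card {w \<in> words V (Suc m). last w \<in> S} = card V ^ m * card S"
proof -
  have "{w \<in> words V (Suc m). last w \<in> S} = (\<lambda>(w, x). w @ [x]) ` (words V m \<times> S)"
  proof
    show "{w \<in> words V (Suc m). last w \<in> S} \<subseteq> (\<lambda>(w, x). w @ [x]) ` (words V m \<times> S)"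
    proof clarify
      fix w assume "w \<in> words V (Suc m)" "last w \<in> S"
      then show "w \<in> (\<lambda>(w, x). w @ [x]) ` (words V m \<times> S)"
        by (elim words_SucE) auto
    qed
    show "(\<lambda>(w, x). w @ [x]) ` (words V m \<times> S) \<subseteq> {w \<in> words V (Suc m). last w \<in> S}"
      using \<open>S \<subseteq> V\<close> by (auto simp: words_def)
  qed
  moreover have "inj_on (\<lambda>(w, x). w @ [x]) (words V m \<times> S)" by (auto simp: inj_on_def)
  moreover have "card (words V m) = card V ^ m"
    using card_lists_length_eq[OF \<open>finite V\<close>] by (simp add: words_def conj_commute)
  ultimately show ?thesis by (simp add: card_image card_cartesian_product)
qed

text \<open>The special vertices have cycle indices \<open>2^m\<close>, \<open>2^{m+1} - 1\<close> and \<open>2^m - 1\<close>, \<open>0\<close>; so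
  each pair is joined by \<open>2^m - 1\<close> steps along the cycle, and the cycle potential shows that
  no path is shorter.\<close>

lemma gdist_schreier_special_pairs:
  assumes cut: "cut_by_edge E S s t" and e: "(s, t) \<in> E" and EV: "E \<subseteq> V \<times> V"
  shows "gdist (schreier_adj V E (Suc m)) (replicate m t @ [s]) (replicate (Suc m) s) = enat (2 ^ m - 1)"
    and "gdist (schreier_adj V E (Suc m)) (replicate m s @ [t]) (replicate (Suc m) t) = enat (2 ^ m - 1)"
proof -
  let ?R = "schreier_adj V E (Suc m)"
  have sS: "s \<in> S" "t \<notin> S" using cut by (auto simp: cut_by_edge_def)
  then have "s \<noteq> t" by auto
  have on_cycle: "set (replicate m x @ [y]) \<subseteq> {s, t}" if "x \<in> {s, t}" "y \<in> {s, t}" for x y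
    using that by auto
  have index: "cycle_index s (replicate m t @ [s]) = 2 ^ m"
    "cycle_index s (replicate m s @ [s]) = 2 ^ Suc m - 1"
    "cycle_index s (replicate m s @ [t]) = 2 ^ m - 1"
    "cycle_index s (replicate m t @ [t]) = 0"
    using \<open>s \<noteq> t\<close> by (simp_all add: cycle_index_append cycle_index_replicate_same
        cycle_index_replicate_other del: replicate_append_same)
  obtain K where K: "(2::nat) ^ m = Suc K" using not0_implies_Suc by force
  have potential: "cycle_potential S s t (replicate m t @ [s]) = 2 ^ m"
    "cycle_potential S s t (replicate m s @ [s]) = 1"
    "cycle_potential S s t (replicate m s @ [t]) = 2 ^ m - 1"
    "cycle_potential S s t (replicate m t @ [t]) = 0"
    using cycle_potential_cycle_word[OF sS on_cycle] index K
    by (simp_all del: replicate_append_same)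
  have path: "(replicate m x @ [y], replicate m x' @ [y']) \<in> ?R ^^ (2 ^ m - 1)"
    if "cycle_index s (replicate m x @ [y]) + (2 ^ m - 1) = cycle_index s (replicate m x' @ [y'])"
      "x \<in> {s, t}" "y \<in> {s, t}" "x' \<in> {s, t}" "y' \<in> {s, t}" for x y x' y'
    using schreier_adj_relpow_cycle[OF e EV \<open>s \<noteq> t\<close> on_cycle[OF that(2,3)] on_cycle[OF that(4,5)]]
      that(1) by simp
  have "(replicate m t @ [s], replicate m s @ [s]) \<in> ?R ^^ (2 ^ m - 1)"
    by (rule path) (use index in auto)
  moreover have "enat (2 ^ m - 1) \<le> gdist ?R (replicate m t @ [s]) (replicate m s @ [s])"
    using cycle_potential_diff_le_gdist[OF cut, of "replicate m t @ [s]" "replicate m s @ [s]"]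
      potential by (simp del: replicate_append_same)
  ultimately show "gdist ?R (replicate m t @ [s]) (replicate (Suc m) s) = enat (2 ^ m - 1)"
    using gdist_le_relpow by (metis antisym replicate_append_same replicate_Suc)
  have "(replicate m t @ [t], replicate m s @ [t]) \<in> ?R ^^ (2 ^ m - 1)"
    by (rule path) (use index in auto)
  then have "(replicate m s @ [t], replicate m t @ [t]) \<in> ?R ^^ (2 ^ m - 1)"
    by (rule relpow_sym[OF sym_schreier_adj])
  moreover have "enat (2 ^ m - 1) \<le> gdist ?R (replicate m s @ [t]) (replicate m t @ [t])"
    using cycle_potential_diff_le_gdist[OF cut, of "replicate m s @ [t]" "replicate m t @ [t]"]
      potential by (simp del: replicate_append_same)
  ultimately show "gdist ?R (replicate m s @ [t]) (replicate (Suc m) t) = enat (2 ^ m - 1)"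
    using gdist_le_relpow by (metis antisym replicate_append_same replicate_Suc)
qed

lemma nGamma_special_edge:
  assumes tree: "oriented_tree V E" and e: "(s, t) \<in> E" and SV: "S \<subseteq> V"
    and cut: "cut_by_edge E S s t"
    and uv: "{u, v} = {replicate (Suc m) s, replicate (Suc m) t}
      \<or> {u, v} = {replicate m s @ [t], replicate m t @ [s]}"
  shows "nGamma V E (Suc m) u v * nGamma V E (Suc m) v u
    = (card V ^ m * card S) * (card V ^ m * card (V - S))"
proof -
  have finV: "finite V" and EV: "E \<subseteq> V \<times> V"
    using tree by (auto simp: oriented_tree_def)
  let ?X = "words V (Suc m)" and ?R = "schreier_adj V E (Suc m)"
  define A where "A = {w \<in> ?X. last w \<in> S}"
  define a1 where "a1 = replicate (Suc m) s"
  define b1 where "b1 = replicate (Suc m) t"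
  define a2 where "a2 = replicate m t @ [s]"
  define b2 where "b2 = replicate m s @ [t]"
  have sS: "s \<in> S" "t \<notin> S" using cut by (auto simp: cut_by_edge_def)
  have "s \<in> V" "t \<in> V" using e EV by auto
  then have ends: "a1 \<in> A" "b1 \<in> ?X - A" "a2 \<in> A" "b2 \<in> ?X - A"
    using sS by (auto simp: A_def a1_def b1_def a2_def b2_def words_def)
  have RX: "?R \<subseteq> ?X \<times> ?X" by (auto simp: schreier_adj_def)
  have AX: "A \<subseteq> ?X" by (auto simp: A_def)
  have cross: "(x, y) = (a1, b1) \<or> (x, y) = (a2, b2)" if "(x, y) \<in> ?R" "x \<in> A" "y \<notin> A" for x y
    using schreier_adj_crossing[OF cut that(1)] that RX
    by (auto simp: A_def a1_def b1_def a2_def b2_def)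
  have dist1: "gdist ?R a2 a1 = gdist ?R b2 b1"
    using gdist_schreier_special_pairs[OF cut e EV, of m] by (simp add: a1_def b1_def a2_def b2_def)
  then have dist2: "gdist ?R a1 a2 = gdist ?R b1 b2"
    by (metis gdist_commute[OF sym_schreier_adj])
  have conn: "\<forall>x\<in>?X. \<forall>y\<in>?X. (x, y) \<in> ?R\<^sup>*" by (rule schreier_connected[OF tree])
  have cross': "(x, y) = (a2, b2) \<or> (x, y) = (a1, b1)" if "(x, y) \<in> ?R" "x \<in> A" "y \<notin> A" for x y
    using cross[OF that] by blast
  note closer = ncloser_two_edge_cut[OF RX sym_schreier_adj conn AX]
  note closer1 = closer[OF ends(1,2) cross dist1] and closer2 = closer[OF ends(3,4) cross' dist2]
  from uv consider "u = a1 \<and> v = b1" | "u = b1 \<and> v = a1" | "u = a2 \<and> v = b2" | "u = b2 \<and> v = a2"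
    unfolding a1_def b1_def a2_def b2_def by (auto simp: doubleton_eq_iff)
  then have "nGamma V E (Suc m) u v * nGamma V E (Suc m) v u = card A * card (?X - A)"
    by cases (simp_all add: nGamma_def closer1 closer2)
  moreover have "?X - A = {w \<in> ?X. last w \<in> V - S}"
    by (auto simp: A_def elim: words_SucE)
  ultimately show ?thesis
    using card_words_last_in[OF finV SV] card_words_last_in[OF finV, of "V - S"]
    by (simp add: A_def)
qed

theorem lemma5p5:
  fixes V :: "'a set" and E :: "('a \<times> 'a) set" and k n :: nat and s t :: 'a
    and u v :: "'a list"
  assumes tree: "oriented_tree V E"
    and k: "card V = k"
    and n: "n \<ge> 1"
    and e: "(s, t) \<in> E"
    and uv: "{u, v} = {replicate n s, replicate n t}
           \<or> {u, v} = {replicate (n - 1) s @ [t], replicate (n - 1) t @ [s]}"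
  shows "int (nGamma V E n u v) * int (nGamma V E n v u)
           = int (nG V E s t) * int (nG V E t s) * int k ^ (2 * (n - 1))
       \<and> int (nG V E s t) * int (nG V E t s) * int k ^ (2 * (n - 1))
           = int (nG V E s t) * int k ^ (n - 1) * (int k ^ n - int (nG V E s t) * int k ^ (n - 1))
       \<and> int (nG V E s t) * int k ^ (n - 1) * (int k ^ n - int (nG V E s t) * int k ^ (n - 1))
           = int (nG V E t s) * int k ^ (n - 1) * (int k ^ n - int (nG V E t s) * int k ^ (n - 1))"
proof -
  obtain m where m: "n = Suc m" using n by (cases n) auto
  obtain S where SV: "S \<subseteq> V" and cut: "cut_by_edge E S s t"
    using tree_cut_by_edge[OF tree e] .
  have "finite V" using tree by (simp add: oriented_tree_def)
  then have "card V = card S + card (V - S)"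
    using card_Diff_subset[OF finite_subset[OF SV] SV] card_mono[OF _ SV] by simp
  then have k_split: "int k = int (card S) + int (card (V - S))" using k by simp
  have "int (nGamma V E n u v) * int (nGamma V E n v u)
      = int (card S) * int k ^ m * (int (card (V - S)) * int k ^ m)"
    using nGamma_special_edge[OF tree e SV cut uv[unfolded m diff_Suc_1]] k m
    by (simp flip: of_nat_mult of_nat_power)
  moreover have "int k ^ (2 * (n - 1)) = int k ^ m * int k ^ m" "int k ^ n = int k * int k ^ m"
    using m by (simp_all add: mult_2 power_add)
  ultimately show ?thesis
    unfolding nG_cut_by_edge[OF tree e SV cut] m diff_Suc_1 k_split
    by (simp add: algebra_simps)
qed

end
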